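(* Let $(u,x)$ and $(u,y)$ be Burge words with the same top row $u$. If $x\sim y$, then $\Gamma(u,x)=\Gamma(u,y)$.
   Context: $\mathrm{Cay}_n$ is the set of Cayley permutations of length $n$ (words of positive integers in which every integer from $1$ to the maximum occurs), $\mathrm{WI}_n$ its weakly increasing elements. For $(u,v)\in\mathrm{WI}_n\times\mathrm{Cay}_n$, viewed as a biword with columns $\binom{u(i)}{v(i)}$, the Burge transpose $(u,v)^T$ turns each column $\binom{a}{b}$ into $\binom{b}{a}$ and sorts the columns increasingly by top entry, ties by decreasing bottom entry. With weak descent set $\mathrm{Des}(v)=\{i:v(i)\ge v(i+1)\}$, the Burge words of length $n$ are the pairs $(u,v)\in\mathrm{WI}_n\times\mathrm{Cay}_n$ with $\mathrm{Des}(u)\subseteq\mathrm{Des}(v)$. $\Gamma(u,v)$ denotes the bottom row of $(u,v)^T$. For $x\in\mathrm{Cay}_n$, $\gamma(x)=\Gamma(1\,2\cdots n,\,x)$, and $x\sim y$ iff $\gamma(x)=\gamma(y)$. *)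

theory Defs
  imports Main "HOL-Library.Product_Lexorder"
begin

text \<open>Words are lists of naturals; positions are 0-indexed internally.\<close>

definition cayley :: "nat list \<Rightarrow> bool" where
  "cayley v \<longleftrightarrow> (\<forall>k\<in>set v. 0 < k \<and> (\<forall>j\<in>{1..k}. j \<in> set v))"

definition weakly_increasing :: "nat list \<Rightarrow> bool" where
  "weakly_increasing u \<longleftrightarrow> cayley u \<and> sorted u"

definition Des :: "nat list \<Rightarrow> nat set" where
  "Des v = {i. Suc i < length v \<and> v ! i \<ge> v ! Suc i}"

definition burge_word :: "nat list \<Rightarrow> nat list \<Rightarrow> bool" where
  "burge_word u v \<longleftrightarrow> length u = length v \<and> weakly_increasing u \<and> cayley v
      \<and> Des u \<subseteq> Des v"

text \<open>Burge transpose: columns (a over b) become (b over a), sorted increasingly by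
  top entry, ties by decreasing bottom entry. Pairs are (top, bottom).\<close>
definition burge_transpose :: "nat list \<Rightarrow> nat list \<Rightarrow> (nat \<times> nat) list" where
  "burge_transpose u v =
     sort_key (\<lambda>(b, a). (b, - int a)) (map (\<lambda>(a, b). (b, a)) (zip u v))"

definition Gamma :: "nat list \<Rightarrow> nat list \<Rightarrow> nat list" where
  "Gamma u v = map snd (burge_transpose u v)"

definition gamma :: "nat list \<Rightarrow> nat list" where
  "gamma x = Gamma [1..<Suc (length x)] x"

definition gamma_equiv :: "nat list \<Rightarrow> nat list \<Rightarrow> bool" where
  "gamma_equiv x y \<longleftrightarrow> gamma x = gamma y"

end

theory Submission
  imports Defs "HOL-Library.Multiset"
begin

text \<open>Since u is weakly increasing, replacing each bottom entry i+1 of the transpose of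
  (1 2 ... n, x) by u(i) keeps its columns in Burge order: columns with equal top entry come in
  decreasing order of i, hence in weakly decreasing order of u(i). So Gamma(u,x) is gamma(x) with
  every letter i replaced by u(i), and depends on x only through gamma(x).\<close>

lemma sort_key_map_monotone:
  fixes h :: "'a \<Rightarrow> 'k::linorder"
  assumes inj: "inj_on h (set (map \<psi> xs))"
    and mono: "\<And>p q. p \<in> set xs \<Longrightarrow> q \<in> set xs \<Longrightarrow> h p \<le> h q \<Longrightarrow> h (\<psi> p) \<le> h (\<psi> q)"
  shows "sort_key h (map \<psi> xs) = map \<psi> (sort_key h xs)"
proof (rule sort_key_inj_key_eq)
  show "mset (map \<psi> xs) = mset (map \<psi> (sort_key h xs))"
    by (metis mset_map mset_sort)
  show "inj_on h (set (map \<psi> xs))" by (fact inj)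
  have "sorted_wrt (\<lambda>p q. h p \<le> h q) (sort_key h xs)"
    using sorted_sort_key[of h xs] by (simp add: sorted_map)
  then have "sorted_wrt (\<lambda>p q. h (\<psi> p) \<le> h (\<psi> q)) (sort_key h xs)"
    by (rule sorted_wrt_mono_rel[rotated]) (auto intro: mono)
  then show "sorted (map h (map \<psi> (sort_key h xs)))"
    by (simp add: sorted_map)
qed

lemma burge_transpose_conv_nth:
  assumes "length u = length x"
  shows "burge_transpose u x =
    sort_key (\<lambda>(b, a). (b, - int a)) (map (\<lambda>i. (x ! i, u ! i)) [0..<length x])"
proof -
  have "map (\<lambda>(a, b). (b, a)) (zip u x) = map (\<lambda>i. (x ! i, u ! i)) [0..<length x]"
    using assms by (intro nth_equalityI) auto
  then show ?thesis by (simp add: burge_transpose_def)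
qed

lemma Gamma_eq_map_gamma:
  assumes len: "length u = length x" and sorted: "sorted u"
  shows "Gamma u x = map (\<lambda>i. u ! (i - 1)) (gamma x)"
proof -
  define h :: "nat \<times> nat \<Rightarrow> nat \<times> int" where "h = (\<lambda>(b, a). (b, - int a))"
  define \<psi> :: "nat \<times> nat \<Rightarrow> nat \<times> nat" where "\<psi> = (\<lambda>(b, i). (b, u ! (i - 1)))"
  define cols where "cols = map (\<lambda>i. (x ! i, i + 1)) [0..<length x]"
  have "map (\<lambda>i. (x ! i, [1..<Suc (length x)] ! i)) [0..<length x] = cols"
    by (simp add: cols_def nth_upt del: upt_Suc)
  then have gamma_cols: "gamma x = map snd (sort_key h cols)"
    by (simp add: gamma_def Gamma_def h_def burge_transpose_conv_nth del: upt_Suc)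
  have "burge_transpose u x = sort_key h (map \<psi> cols)"
    by (simp add: burge_transpose_conv_nth[OF len] cols_def h_def \<psi>_def comp_def)
  also have "\<dots> = map \<psi> (sort_key h cols)"
  proof (rule sort_key_map_monotone)
    have "inj h"
      by (auto simp: h_def inj_def)
    then show "inj_on h (set (map \<psi> cols))"
      by (rule inj_on_subset) simp
    fix p q assume "p \<in> set cols" "q \<in> set cols" and le: "h p \<le> h q"
    then obtain i j where ij: "i < length x" "j < length x"
      and pq: "p = (x ! i, i + 1)" "q = (x ! j, j + 1)"
      by (auto simp: cols_def)
    show "h (\<psi> p) \<le> h (\<psi> q)"
    proof (cases "x ! i = x ! j")
      case True
      with le pq have "j \<le> i" by (simp add: h_def)
      then have "u ! j \<le> u ! i"
        using sorted ij len by (simp add: sorted_nth_mono)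
      with True pq show ?thesis by (simp add: h_def \<psi>_def)
    next
      case False
      with le pq show ?thesis by (auto simp: h_def \<psi>_def)
    qed
  qed
  finally show ?thesis
    by (simp add: Gamma_def gamma_cols \<psi>_def case_prod_beta)
qed

theorem lemma4p13:
  fixes u x y :: "nat list"
  assumes "burge_word u x" and "burge_word u y" and "gamma_equiv x y"
  shows "Gamma u x = Gamma u y"
proof -
  have "length u = length x" "length u = length y" "sorted u"
    using assms(1,2) by (auto simp: burge_word_def weakly_increasing_def)
  then show ?thesis
    using Gamma_eq_map_gamma assms(3) unfolding gamma_equiv_def by metis
qed

end
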